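(* Let $(S,\ast)$ be a countable adequate partial semigroup and let $A\subseteq S$. If there is an idempotent $p\in\overline{A}\cap J_\delta(S)$, then there is a decreasing sequence $\langle A_n\rangle_{n=1}^\infty$ of subsets of $A$ such that (i) for all $n\in\mathbb{N}$ and all $x\in A_n$ there exists $m\in\mathbb{N}$ with $A_m\subseteq x^{-1}A_n$; (ii) for all $n\in\mathbb{N}$, $A_n$ is a $J_\delta$-set.
   Context: A partial semigroup is a pair $(S,\ast)$ where $\ast$ is an operation defined on a subset of $S\times S$ such that $(x\ast y)\ast z=x\ast(y\ast z)$ in the sense that if either side is defined, so is the other and they are equal. $\phi_S(s)=\{t: s\ast t\text{ defined}\}$, $\sigma_S(H)=\bigcap_{s\in H}\phi_S(s)$ for $H\in\mathcal{P}_f(S)$; $S$ is adequate if all $\sigma_S(H)\ne\emptyset$. $\overline{A}=\{p\in\beta S: A\in p\}$. $\delta S=\bigcap_{x\in S}\overline{\phi_S(x)}$, with operation $p\ast q=\{B\subseteq S:\{s: s^{-1}B\in q\}\in p\}$, where $s^{-1}B=\{t\in\phi_S(s): s\ast t\in B\}$. A sequence $\langle y_n\rangle$ in $S$ is adequate if $\prod_{n\in F}y_n$ is defined for every $F\in\mathcal{P}_f(\mathbb{N})$ and for every $K\in\mathcal{P}_f(S)$ there is $m$ with $\prod_{n\in F}y_n\in\sigma_S(K)$ whenever $\min F\ge m$; $\mathcal{T}_S$ is the set of adequate sequences. For $W\in\mathcal{P}_f(S)$, $a\in S$, $W\ast a=\{w\ast a: w\in W,\ w\ast a\text{ defined}\}$.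 $B\subseteq S$ is a $J_\delta$-set if for every $F\in\mathcal{P}_f(\mathcal{T}_S)$ and $W\in\mathcal{P}_f(S)$ there exist $a\in\sigma_S(W)$ and $H\in\mathcal{P}_f(\mathbb{N})$ with $\prod_{t\in H}f(t)\in\sigma_S(W\ast a)$ and $a\ast\prod_{t\in H}f(t)\in B$ for each $f\in F$; $J_\delta(S)=\{p\in\delta S:\text{every member of }p\text{ is a }J_\delta\text{-set}\}$. *)

theory Defs
  imports Main "HOL-Library.Countable_Set"
begin

text \<open>A partial semigroup on the carrier type 'a: the operation is
  op :: 'a => 'a => 'a option, with op x y = None meaning x * y undefined.\<close>

definition partial_semigroup :: "('a \<Rightarrow> 'a \<Rightarrow> 'a option) \<Rightarrow> bool" where
  "partial_semigroup op \<longleftrightarrow>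
     (\<forall>x y z. Option.bind (op x y) (\<lambda>u. op u z) = Option.bind (op y z) (\<lambda>v. op x v))"

definition phiS :: "('a \<Rightarrow> 'a \<Rightarrow> 'a option) \<Rightarrow> 'a \<Rightarrow> 'a set" where
  "phiS op s = {t. op s t \<noteq> None}"

definition sigmaS :: "('a \<Rightarrow> 'a \<Rightarrow> 'a option) \<Rightarrow> 'a set \<Rightarrow> 'a set" where
  "sigmaS op H = (\<Inter>s\<in>H. phiS op s)"

definition adequate :: "('a \<Rightarrow> 'a \<Rightarrow> 'a option) \<Rightarrow> bool" where
  "adequate op \<longleftrightarrow> (\<forall>H. finite H \<and> H \<noteq> {} \<longrightarrow> sigmaS op H \<noteq> {})"

definition is_ultrafilter :: "'a set set \<Rightarrow> bool" where
  "is_ultrafilter p \<longleftrightarrow> UNIV \<in> p \<and> {} \<notin> p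
     \<and> (\<forall>A B. A \<in> p \<and> A \<subseteq> B \<longrightarrow> B \<in> p)
     \<and> (\<forall>A B. A \<in> p \<and> B \<in> p \<longrightarrow> A \<inter> B \<in> p)
     \<and> (\<forall>A. A \<in> p \<or> - A \<in> p)"

definition deltaS :: "('a \<Rightarrow> 'a \<Rightarrow> 'a option) \<Rightarrow> 'a set set set" where
  "deltaS op = {p. is_ultrafilter p \<and> (\<forall>x. phiS op x \<in> p)}"

definition linv :: "('a \<Rightarrow> 'a \<Rightarrow> 'a option) \<Rightarrow> 'a \<Rightarrow> 'a set \<Rightarrow> 'a set" where
  "linv op s B = {t. t \<in> phiS op s \<and> the (op s t) \<in> B}"

definition uprod :: "('a \<Rightarrow> 'a \<Rightarrow> 'a option) \<Rightarrow> 'a set set \<Rightarrow> 'a set set \<Rightarrow> 'a set set" where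
  "uprod op p q = {B. {s. linv op s B \<in> q} \<in> p}"

fun lprod :: "('a \<Rightarrow> 'a \<Rightarrow> 'a option) \<Rightarrow> 'a list \<Rightarrow> 'a option" where
  "lprod op [] = None"
| "lprod op [x] = Some x"
| "lprod op (x # xs) = Option.bind (lprod op xs) (\<lambda>v. op x v)"

definition fprod :: "('a \<Rightarrow> 'a \<Rightarrow> 'a option) \<Rightarrow> (nat \<Rightarrow> 'a) \<Rightarrow> nat set \<Rightarrow> 'a option" where
  "fprod op y F = lprod op (map y (sorted_list_of_set F))"

definition adequate_seq :: "('a \<Rightarrow> 'a \<Rightarrow> 'a option) \<Rightarrow> (nat \<Rightarrow> 'a) \<Rightarrow> bool" where
  "adequate_seq op y \<longleftrightarrow>
     (\<forall>F. finite F \<and> F \<noteq> {} \<longrightarrow> fprod op y F \<noteq> None)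
   \<and> (\<forall>K. finite K \<and> K \<noteq> {} \<longrightarrow>
        (\<exists>m. \<forall>F. finite F \<and> F \<noteq> {} \<and> Min F \<ge> m \<longrightarrow> the (fprod op y F) \<in> sigmaS op K))"

definition rmult_set :: "('a \<Rightarrow> 'a \<Rightarrow> 'a option) \<Rightarrow> 'a set \<Rightarrow> 'a \<Rightarrow> 'a set" where
  "rmult_set op W a = {the (op w a) | w. w \<in> W \<and> op w a \<noteq> None}"

definition Jdelta_set :: "('a \<Rightarrow> 'a \<Rightarrow> 'a option) \<Rightarrow> 'a set \<Rightarrow> bool" where
  "Jdelta_set op B \<longleftrightarrow>
     (\<forall>F W. finite F \<and> F \<noteq> {} \<and> (\<forall>f\<in>F. adequate_seq op f) \<and> finite W \<and> W \<noteq> {} \<longrightarrow>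
        (\<exists>a \<in> sigmaS op W. \<exists>H. finite H \<and> H \<noteq> {} \<and>
           (\<forall>f\<in>F. fprod op f H \<noteq> None \<and> the (fprod op f H) \<in> sigmaS op (rmult_set op W a)
                  \<and> op a (the (fprod op f H)) \<noteq> None \<and> the (op a (the (fprod op f H))) \<in> B)))"

definition Jdelta :: "('a \<Rightarrow> 'a \<Rightarrow> 'a option) \<Rightarrow> 'a set set set" where
  "Jdelta op = {p \<in> deltaS op. \<forall>B\<in>p. Jdelta_set op B}"

end

theory Submission
  imports Defs
begin

text \<open>For an idempotent ultrafilter p and B in p, the set
  star B = {x in B. x^-1 B in p} is again in p, and x^-1 (star B) is in p for every
  x in star B, because x^-1 {s. s^-1 B in p} = {y. y^-1 (x^-1 B) in p} by associativity.
  Enumerate S as e_0, e_1, ... and put A_0 = star A and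
  A_(k+1) = star (A_k \<inter> \<Inter>{e_i^-1 A_j | i, j \<le> k, e_i in A_j}).
  Every A_n lies in p, hence is a J_delta-set when p is in J_delta(S), and
  e_i in A_n gives A_m \<subseteq> e_i^-1 A_n for m = max i n + 1.
  Only the ultrafilter property and idempotence of p enter.\<close>

lemma ultrafilter_Int: "is_ultrafilter p \<Longrightarrow> A \<in> p \<Longrightarrow> B \<in> p \<Longrightarrow> A \<inter> B \<in> p"
  unfolding is_ultrafilter_def by blast

lemma ultrafilter_Inter:
  assumes "is_ultrafilter p" "finite F" "F \<subseteq> p"
  shows "\<Inter>F \<in> p"
  using assms(2,3)
proof (induction F rule: finite_induct)
  case empty
  then show ?case using assms(1) unfolding is_ultrafilter_def by simp
next
  case (insert X F)
  then show ?case using ultrafilter_Int[OF assms(1)] by simp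
qed

lemma linv_linv:
  assumes "partial_semigroup op"
  shows "linv op y (linv op x B) = (case op x y of None \<Rightarrow> {} | Some z \<Rightarrow> linv op z B)"
proof -
  have assoc: "Option.bind (op x y) (\<lambda>u. op u t) = Option.bind (op y t) (op x)" for t
    using assms unfolding partial_semigroup_def by blast
  show ?thesis
  proof (cases "op x y")
    case None
    then have "op y t = Some v \<Longrightarrow> op x v = None" for t v using assoc[of t] by simp
    then show ?thesis using None unfolding linv_def phiS_def by auto
  next
    case (Some z)
    then have "op z t = Option.bind (op y t) (op x)" for t using assoc[of t] by simp
    then show ?thesis using Some unfolding linv_def phiS_def by (auto split: Option.bind_splits)
  qed
qed

locale idempotent_ultrafilter =
  fixes op :: "'a \<Rightarrow> 'a \<Rightarrow> 'a option" and p :: "'a set set"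
  assumes partial_semigroup: "partial_semigroup op"
    and ultrafilter: "is_ultrafilter p"
    and idempotent: "uprod op p p = p"
begin

lemma Collect_linv_mem: "B \<in> p \<Longrightarrow> {s. linv op s B \<in> p} \<in> p"
  using idempotent unfolding uprod_def by blast

lemma linv_Collect_linv_mem: "linv op x {s. linv op s B \<in> p} = {y. linv op y (linv op x B) \<in> p}"
proof -
  have "{} \<notin> p" using ultrafilter unfolding is_ultrafilter_def by blast
  then show ?thesis
    unfolding linv_linv[OF partial_semigroup]
    by (auto simp: linv_def phiS_def split: option.splits)
qed

definition star :: "'a set \<Rightarrow> 'a set" where
  "star B = {x \<in> B. linv op x B \<in> p}"

lemma star_subset: "star B \<subseteq> B"
  unfolding star_def by blast

lemma star_mem: "B \<in> p \<Longrightarrow> star B \<in> p"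
proof -
  assume "B \<in> p"
  moreover have "star B = B \<inter> {s. linv op s B \<in> p}" unfolding star_def by blast
  ultimately show ?thesis using ultrafilter_Int[OF ultrafilter] Collect_linv_mem by simp
qed

lemma linv_star_mem:
  assumes "x \<in> star B"
  shows "linv op x (star B) \<in> p"
proof -
  have xB: "linv op x B \<in> p" using assms unfolding star_def by blast
  have "linv op x (star B) = linv op x B \<inter> linv op x {s. linv op s B \<in> p}"
    unfolding star_def linv_def by blast
  also have "\<dots> = linv op x B \<inter> {y. linv op y (linv op x B) \<in> p}"
    by (simp only: linv_Collect_linv_mem)
  finally show ?thesis using ultrafilter_Int[OF ultrafilter xB Collect_linv_mem[OF xB]] by simp
qed

text \<open>star_prefix e A k j is A_j for j \<le> k (and junk for j > k); the whole prefix
  is carried along because A_(k+1) depends on all earlier terms.\<close>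

primrec star_prefix :: "(nat \<Rightarrow> 'a) \<Rightarrow> 'a set \<Rightarrow> nat \<Rightarrow> nat \<Rightarrow> 'a set" where
  "star_prefix e A 0 = (\<lambda>_. star A)"
| "star_prefix e A (Suc k) = (let C = star_prefix e A k in
     C(Suc k := star (C k \<inter> \<Inter>{linv op (e i) (C j) | i j. i \<le> k \<and> j \<le> k \<and> e i \<in> C j})))"

definition star_chain :: "(nat \<Rightarrow> 'a) \<Rightarrow> 'a set \<Rightarrow> nat \<Rightarrow> 'a set" where
  "star_chain e A n = star_prefix e A n n"

lemma star_prefix_eq_star_chain: "j \<le> k \<Longrightarrow> star_prefix e A k j = star_chain e A j"
  by (induction k) (auto simp: star_chain_def le_Suc_eq Let_def)

lemma star_chain_0: "star_chain e A 0 = star A"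
  by (simp add: star_chain_def)

lemma star_chain_Suc:
  "star_chain e A (Suc k) = star (star_chain e A k \<inter>
     \<Inter>{linv op (e i) (star_chain e A j) | i j. i \<le> k \<and> j \<le> k \<and> e i \<in> star_chain e A j})"
proof -
  have "star_chain e A (Suc k) = star (star_prefix e A k k \<inter>
     \<Inter>{linv op (e i) (star_prefix e A k j) | i j. i \<le> k \<and> j \<le> k \<and> e i \<in> star_prefix e A k j})"
    by (simp add: star_chain_def Let_def)
  also have "star_prefix e A k k = star_chain e A k"
    by (simp add: star_prefix_eq_star_chain)
  also have
    "{linv op (e i) (star_prefix e A k j) | i j. i \<le> k \<and> j \<le> k \<and> e i \<in> star_prefix e A k j}
   = {linv op (e i) (star_chain e A j) | i j. i \<le> k \<and> j \<le> k \<and> e i \<in> star_chain e A j}"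
    using star_prefix_eq_star_chain[of _ k e A] by (metis (lifting))
  finally show ?thesis .
qed

lemma star_chain_decreasing: "star_chain e A (Suc k) \<subseteq> star_chain e A k"
  using star_subset unfolding star_chain_Suc by blast

lemma star_chain_subset: "star_chain e A n \<subseteq> A"
proof (induction n)
  case 0
  then show ?case using star_subset by (simp add: star_chain_0)
next
  case (Suc n)
  then show ?case using star_chain_decreasing by blast
qed

lemma finite_linv_family:
  fixes e :: "nat \<Rightarrow> 'a" and C :: "nat \<Rightarrow> 'a set"
  shows "finite {linv op (e i) (C j) | i j. i \<le> k \<and> j \<le> k \<and> e i \<in> C j}"
proof (rule finite_subset)
  show "finite {linv op (e i) (C j) | i j. i \<le> k \<and> j \<le> k}"
    by (intro finite_image_set2) simp_all
qed blast

lemma star_chain_eq_star_mem: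
  assumes "A \<in> p"
  shows "\<exists>C\<in>p. star_chain e A n = star C"
proof (induction n rule: less_induct)
  case (less n)
  show ?case
  proof (cases n)
    case 0
    then show ?thesis using assms star_chain_0 by blast
  next
    case (Suc k)
    let ?F = "{linv op (e i) (star_chain e A j) | i j. i \<le> k \<and> j \<le> k \<and> e i \<in> star_chain e A j}"
    have "?F \<subseteq> p"
    proof clarify
      fix i j assume "j \<le> k" and ij: "e i \<in> star_chain e A j"
      then have "j < n" using Suc by simp
      then obtain C where "star_chain e A j = star C" using less.IH by blast
      then show "linv op (e i) (star_chain e A j) \<in> p" using ij linv_star_mem by simp
    qed
    moreover obtain C where "C \<in> p" and "star_chain e A k = star C"
      using less.IH[of k] Suc by blast
    then have "star_chain e A k \<in> p" by (simp add: star_mem)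
    ultimately have "\<Inter>(insert (star_chain e A k) ?F) \<in> p"
      by (intro ultrafilter_Inter[OF ultrafilter]) (simp_all add: finite_linv_family)
    then have "star_chain e A k \<inter> \<Inter>?F \<in> p" by simp
    then show ?thesis unfolding Suc star_chain_Suc by blast
  qed
qed

lemma star_chain_mem: "A \<in> p \<Longrightarrow> star_chain e A n \<in> p"
  using star_chain_eq_star_mem star_mem by metis

lemma star_chain_subset_linv:
  assumes "e i \<in> star_chain e A n"
  shows "star_chain e A (Suc (max i n)) \<subseteq> linv op (e i) (star_chain e A n)"
proof -
  let ?k = "max i n"
  have "linv op (e i) (star_chain e A n) \<in> {linv op (e i') (star_chain e A j) | i' j.
      i' \<le> ?k \<and> j \<le> ?k \<and> e i' \<in> star_chain e A j}"
    using assms max.cobounded1 max.cobounded2 by blast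
  then show ?thesis using star_subset unfolding star_chain_Suc by blast
qed

theorem decreasing_chain_linv:
  assumes "countable (UNIV :: 'a set)" and "A \<in> p"
  shows "\<exists>An :: nat \<Rightarrow> 'a set.
           (\<forall>n. An (Suc n) \<subseteq> An n) \<and> (\<forall>n. An n \<subseteq> A)
         \<and> (\<forall>n. \<forall>x\<in>An n. \<exists>m. An m \<subseteq> linv op x (An n))
         \<and> (\<forall>n. An n \<in> p)"
proof -
  define e where "e = from_nat_into (UNIV :: 'a set)"
  have linv: "\<exists>m. star_chain e A m \<subseteq> linv op x (star_chain e A n)"
    if "x \<in> star_chain e A n" for x n
  proof -
    obtain i where "x = e i"
      using range_from_nat_into[OF UNIV_not_empty assms(1)] unfolding e_def by blast
    then show ?thesis using that star_chain_subset_linv by blast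
  qed
  show ?thesis
    using star_chain_decreasing star_chain_subset star_chain_mem[OF assms(2)] linv
    by (intro exI[of _ "star_chain e A"]) simp
qed

end

theorem corollary4p5:
  fixes op :: "'a \<Rightarrow> 'a \<Rightarrow> 'a option" and A :: "'a set" and p :: "'a set set"
  assumes "partial_semigroup op"
    and "countable (UNIV :: 'a set)"
    and "adequate op"
    and "p \<in> Jdelta op"
    and "uprod op p p = p"
    and "A \<in> p"
  shows "\<exists>An :: nat \<Rightarrow> 'a set.
           (\<forall>n. An (Suc n) \<subseteq> An n) \<and> (\<forall>n. An n \<subseteq> A)
         \<and> (\<forall>n. \<forall>x\<in>An n. \<exists>m. An m \<subseteq> linv op x (An n))
         \<and> (\<forall>n. Jdelta_set op (An n))"
proof -
  have "is_ultrafilter p" and Jdelta_mem: "\<forall>B\<in>p. Jdelta_set op B"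
    using assms(4) unfolding Jdelta_def deltaS_def by blast+
  then interpret idempotent_ultrafilter op p
    using assms(1,5) by unfold_locales
  obtain An where "(\<forall>n. An (Suc n) \<subseteq> An n) \<and> (\<forall>n. An n \<subseteq> A)
      \<and> (\<forall>n. \<forall>x\<in>An n. \<exists>m. An m \<subseteq> linv op x (An n)) \<and> (\<forall>n. An n \<in> p)"
    using decreasing_chain_linv[OF assms(2,6)] by blast
  then show ?thesis using Jdelta_mem by (intro exI[of _ An]) blast
qed

end
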